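(* Let $\ell\ge1$ and let $G_{\mathcal P}$ be the dual-entry path on vertices $\{1,2,3,\dots,\ell+2\}$, with entry vertices $1,2$ taken as leaders and inner vertices $3,\dots,\ell+2$ (in path order) taken as followers: its edge set is $\{(1,3),(2,3)\}$ if $\ell=1$, and $\{(1,3),(2,\ell+2)\}\cup\{(r,r+1),(r+1,r):3\le r<\ell+2\}$ if $\ell\ge2$. Let $(\tilde g,\theta)$ be a nominal configuration on these vertices. Then: (1) $\hat M_{ff}$ is non-singular if and only if $\tilde p^x_{uv,\theta}\tilde p^y_{uv,\theta}\tilde\phi_{uv}\ne0$ for $\{u,v\}=\{1,2\}$ and for every $\{u,v\}=\{r,r+1\}$ with $3\le r<\ell+2$; (2) if the condition in (1) holds and moreover $\tilde p^x_{1l,\theta}\tilde p^y_{1l,\theta}\tilde\phi_{1l}\ne0$ for every $l=4,\dots,\ell+2$, then there exists a diagonal matrix $D$ such that every eigenvalue of $D\hat M_{ff}$ has positive real part.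
   Context: $(a,b)$ in the edge set means agent $b$ measures agent $a$. $R(\theta)$ is the $2\times2$ rotation by $\theta$, $\Theta=\mathrm{diag}(R(\theta),1)$. $\tilde g_i=[\tilde p_i^\top,\tilde\phi_i]^\top\in\mathbb R^3$, $\Theta^\top\tilde g_i=[\tilde p^x_{i,\theta},\tilde p^y_{i,\theta},\tilde\phi_i]^\top$; $\tilde p^x_{uv,\theta}=\tilde p^x_{u,\theta}-\tilde p^x_{v,\theta}$, similarly $y$, $\tilde\phi_{uv}=\tilde\phi_u-\tilde\phi_v$; $w_{uv}=\mathrm{diag}(\tilde p^x_{uv,\theta},\tilde p^y_{uv,\theta},\tilde\phi_{uv})$. With vertex set $V=\{1,\dots,\ell+2\}$ and edge set $E$, $C=\{(i,j,k)\in V^3:(i,k),(j,k)\in E,\ i<j\}$, and $\hat M\in\mathbb R^{3(\ell+2)\times3(\ell+2)}$ is defined by: for $x=[x_1^\top,\dots,x_{\ell+2}^\top]^\top$, the $k$-th $3$-block of $\hat Mx$ is $\sum_{(i,j,k)\in C}(w_{jk}(x_i-x_k)+w_{ki}(x_j-x_k))$. $\hat M_{ff}\in\mathbb R^{3\ell\times3\ell}$ is the submatrix of $\hat M$ with rows and columns indexed by the followers $3,\dots,\ell+2$. *)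

theory Defs
  imports "Jordan_Normal_Form.Jordan_Normal_Form"
begin

text \<open>Vertices are the naturals 1..N. A configuration is given by the component functions
  px, py, phi of g_i = [p_i^T, phi_i]^T together with the angle theta.
  Stacked vectors in R^(3N): vertex k, component a (a<3) sits at index 3*(k-1)+a.\<close>

definition rot_px :: "real \<Rightarrow> (nat \<Rightarrow> real) \<Rightarrow> (nat \<Rightarrow> real) \<Rightarrow> nat \<Rightarrow> real" where
  "rot_px \<theta> px py i = cos \<theta> * px i + sin \<theta> * py i"

definition rot_py :: "real \<Rightarrow> (nat \<Rightarrow> real) \<Rightarrow> (nat \<Rightarrow> real) \<Rightarrow> nat \<Rightarrow> real" where
  "rot_py \<theta> px py i = - sin \<theta> * px i + cos \<theta> * py i"

text \<open>Diagonal entry a (a = 0,1,2) of w_uv = diag(p^x_{uv,theta}, p^y_{uv,theta}, phi_uv).\<close>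
definition wdiag :: "real \<Rightarrow> (nat \<Rightarrow> real) \<Rightarrow> (nat \<Rightarrow> real) \<Rightarrow> (nat \<Rightarrow> real) \<Rightarrow> nat \<Rightarrow> nat \<Rightarrow> nat \<Rightarrow> real" where
  "wdiag \<theta> px py phi u v a =
     (if a = 0 then rot_px \<theta> px py u - rot_px \<theta> px py v
      else if a = 1 then rot_py \<theta> px py u - rot_py \<theta> px py v
      else phi u - phi v)"

definition wprod :: "real \<Rightarrow> (nat \<Rightarrow> real) \<Rightarrow> (nat \<Rightarrow> real) \<Rightarrow> (nat \<Rightarrow> real) \<Rightarrow> nat \<Rightarrow> nat \<Rightarrow> real" where
  "wprod \<theta> px py phi u v =
     (rot_px \<theta> px py u - rot_px \<theta> px py v) * (rot_py \<theta> px py u - rot_py \<theta> px py v) * (phi u - phi v)"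

definition triples :: "nat \<Rightarrow> (nat \<times> nat) set \<Rightarrow> (nat \<times> nat \<times> nat) set" where
  "triples N E = {(i,j,k). i \<in> {1..N} \<and> j \<in> {1..N} \<and> k \<in> {1..N} \<and> (i,k) \<in> E \<and> (j,k) \<in> E \<and> i < j}"

definition blk :: "real vec \<Rightarrow> nat \<Rightarrow> nat \<Rightarrow> real" where
  "blk x k a = x $ (3 * (k - 1) + a)"

definition Mhat_apply :: "nat \<Rightarrow> (nat \<times> nat) set \<Rightarrow> real \<Rightarrow> (nat \<Rightarrow> real) \<Rightarrow> (nat \<Rightarrow> real) \<Rightarrow> (nat \<Rightarrow> real) \<Rightarrow> real vec \<Rightarrow> real vec" where
  "Mhat_apply N E \<theta> px py phi x = vec (3 * N) (\<lambda>r.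
     let k = r div 3 + 1; a = r mod 3 in
     (\<Sum>(i,j) \<in> {(i,j). (i,j,k) \<in> triples N E}.
        wdiag \<theta> px py phi j k a * (blk x i a - blk x k a)
      + wdiag \<theta> px py phi k i a * (blk x j a - blk x k a)))"

definition Mhat :: "nat \<Rightarrow> (nat \<times> nat) set \<Rightarrow> real \<Rightarrow> (nat \<Rightarrow> real) \<Rightarrow> (nat \<Rightarrow> real) \<Rightarrow> (nat \<Rightarrow> real) \<Rightarrow> real mat" where
  "Mhat N E \<theta> px py phi =
     mat (3 * N) (3 * N) (\<lambda>(r,c). Mhat_apply N E \<theta> px py phi (unit_vec (3 * N) c) $ r)"

text \<open>Follower block: vertices 3..N, i.e. indices 6..3N-1.\<close>
definition Mff :: "nat \<Rightarrow> (nat \<times> nat) set \<Rightarrow> real \<Rightarrow> (nat \<Rightarrow> real) \<Rightarrow> (nat \<Rightarrow> real) \<Rightarrow> (nat \<Rightarrow> real) \<Rightarrow> real mat" where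
  "Mff N E \<theta> px py phi =
     mat (3 * (N - 2)) (3 * (N - 2)) (\<lambda>(r,c). Mhat N E \<theta> px py phi $$ (r + 6, c + 6))"

definition dual_entry_path :: "nat \<Rightarrow> (nat \<times> nat) set" where
  "dual_entry_path l =
     (if l = 1 then {(1,3),(2,3)}
      else {(1,3),(2,l+2)} \<union> {(r,r+1) | r. 3 \<le> r \<and> r < l + 2} \<union> {(r+1,r) | r. 3 \<le> r \<and> r < l + 2})"

end

theory Submission
  imports Defs
begin

text \<open>
  Listing the followers along the path 1, 3, 4, ..., l+2, 2 between the two leaders, M_ff splits
  into three tridiagonal blocks, one for each coordinate a of the rotated configuration. Up to the
  sign of one row, row m of block a maps the follower sequence P (extended by P_0 = P_(l+1) = 0) to
  (Z_(m+1) - Z_m)(P_(m-1) - P_m) + (Z_m - Z_(m-1))(P_(m+1) - P_m), where Z_k is coordinate a of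
  the k-th path vertex; this vanishes iff the points (Z_k, P_k), k = m-1, m, m+1, are collinear.
  If consecutive Z_k differ, a kernel vector therefore lies on one line through (Z_0, 0), and
  P_(l+1) = 0 forces P = 0 unless Z_(l+1) = Z_0. If Z_m = Z_(m-1), rows m-1 and m are both
  multiples of P_m - P_(m-1).

  For (2), in the coordinates W_k = (Z_(k+1) - Z_0) P_k - (Z_k - Z_0) P_(k+1) suitably rescaled
  rows become lower bidiagonal. Scaling row k by a factor of order \<epsilon>^k turns the eigenproblem of
  D M_ff into \<lambda> W_k = \<epsilon>^k (W_k - \<alpha>_k W_(k-1) + O(\<epsilon>)); after the similarity diag(\<eta>^k) with
  \<epsilon> = \<eta>^2 this is strictly diagonally dominant with positive diagonal, so Gershgorin's theorem
  gives Re \<lambda> > 0.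
\<close>

section \<open>Diagonal dominance and singularity\<close>

lemma ex_pos_small_quadratic:
  assumes "finite K"
  shows "\<exists>\<eta>>0. \<forall>k\<in>K. \<eta> * A k + \<eta>\<^sup>2 * B k < (1::real)"
proof -
  have "((\<lambda>\<eta>. \<eta> * A k + \<eta>\<^sup>2 * B k) \<longlongrightarrow> 0) (at_right 0)" for k
    by (auto intro!: tendsto_eq_intros)
  then have "\<forall>\<^sub>F \<eta> in at_right 0. \<eta> > 0 \<and> (\<forall>k\<in>K. \<eta> * A k + \<eta>\<^sup>2 * B k < 1)"
    using assms by (intro eventually_conj eventually_at_right_less eventually_ball_finite ballI
        order_tendstoD(2)) auto
  then show ?thesis using eventually_happens[of _ "at_right (0::real)"] by auto
qed

lemma ex_weighted_max_index:
  fixes W :: "nat \<Rightarrow> 'a::real_normed_vector"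
  assumes "\<eta> > 0" and bdry: "W 0 = 0" "W (l + 1) = 0" and nz: "\<exists>k\<in>{1..l}. W k \<noteq> 0"
  shows "\<exists>k\<in>{1..l}. W k \<noteq> 0 \<and> norm (W (k - 1)) \<le> \<eta> * norm (W k) \<and> norm (W (k + 1)) \<le> norm (W k) / \<eta>"
proof -
  define g where "g j = norm (W j) * \<eta> ^ j" for j
  obtain k where k: "k \<in> {1..l}" "g k = Max (g ` {1..l})"
    using nz Max_in[of "g ` {1..l}"] by fastforce
  have max: "g j \<le> g k" if "j \<in> {1..l}" for j
    using that k(2) by simp
  obtain k' where "k' \<in> {1..l}" "W k' \<noteq> 0" using nz by blast
  then have "0 < g k'" using \<open>\<eta> > 0\<close> unfolding g_def by simp
  then have "0 < g k" using max[of k'] \<open>k' \<in> {1..l}\<close> by linarith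
  then have "W k \<noteq> 0" unfolding g_def by auto
  moreover have "norm (W (k - 1)) \<le> \<eta> * norm (W k)"
  proof (cases "k = 1")
    case False
    then have "k - 1 \<in> {1..l}" "\<eta> ^ k = \<eta> * \<eta> ^ (k - 1)" using k(1)
      by (auto simp: power_eq_if)
    then have "g (k - 1) \<le> g k" "\<eta> ^ k = \<eta> * \<eta> ^ (k - 1)" using max by auto
    then show ?thesis using \<open>\<eta> > 0\<close> unfolding g_def by (simp add: mult.assoc mult.left_commute)
  qed (use bdry \<open>\<eta> > 0\<close> in simp)
  moreover have "norm (W (k + 1)) \<le> norm (W k) / \<eta>"
  proof (cases "k = l")
    case False
    then have "g (k + 1) \<le> g k" using k(1) max[of "k + 1"] by auto
    then show ?thesis using \<open>\<eta> > 0\<close> unfolding g_def by (simp add: field_simps)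
  qed (use bdry \<open>\<eta> > 0\<close> in simp)
  ultimately show ?thesis using k(1) by blast
qed

text \<open>Gershgorin's theorem for a tridiagonal eigenproblem after the similarity diag(\<eta>^k),
  applied at a row where norm (W k) * \<eta>^k is maximal.\<close>

lemma eigenvalue_Re_pos_of_weighted_dominance:
  fixes W :: "nat \<Rightarrow> complex" and s a b c :: "nat \<Rightarrow> real"
  assumes "\<eta> > 0" and bdry: "W 0 = 0" "W (l + 1) = 0" and nz: "\<exists>k\<in>{1..l}. W k \<noteq> 0"
    and eig: "\<forall>k\<in>{1..l}. s k > 0 \<and> ev * W k = s k *\<^sub>R (a k *\<^sub>R W (k - 1) + b k *\<^sub>R W k + c k *\<^sub>R W (k + 1))"
    and dom: "\<forall>k\<in>{1..l}. \<bar>a k\<bar> * \<eta> + \<bar>c k\<bar> / \<eta> < b k"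
  shows "Re ev > 0"
proof -
  obtain k where k: "k \<in> {1..l}" "W k \<noteq> 0"
    and below: "norm (W (k - 1)) \<le> \<eta> * norm (W k)" and above: "norm (W (k + 1)) \<le> norm (W k) / \<eta>"
    using ex_weighted_max_index[OF \<open>\<eta> > 0\<close> bdry nz] by blast
  define \<mu> where "\<mu> = ev / of_real (s k)"
  have "s k > 0" using eig k(1) by blast
  have "of_real (s k) * (\<mu> * W k) = ev * W k"
    using \<open>s k > 0\<close> unfolding \<mu>_def by simp
  also have "\<dots> = of_real (s k) * (a k *\<^sub>R W (k - 1) + b k *\<^sub>R W k + c k *\<^sub>R W (k + 1))"
    using eig k(1) by (simp add: scaleR_conv_of_real)
  finally have "\<mu> * W k = a k *\<^sub>R W (k - 1) + b k *\<^sub>R W k + c k *\<^sub>R W (k + 1)"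
    using \<open>s k > 0\<close> by simp
  then have "(\<mu> - of_real (b k)) * W k = a k *\<^sub>R W (k - 1) + c k *\<^sub>R W (k + 1)"
    by (simp add: algebra_simps scaleR_conv_of_real)
  then have "norm (\<mu> - of_real (b k)) * norm (W k) = norm (a k *\<^sub>R W (k - 1) + c k *\<^sub>R W (k + 1))"
    by (metis norm_mult)
  also have "\<dots> \<le> \<bar>a k\<bar> * norm (W (k - 1)) + \<bar>c k\<bar> * norm (W (k + 1))"
    by (rule order_trans[OF norm_triangle_ineq]) simp
  also have "\<dots> \<le> (\<bar>a k\<bar> * \<eta> + \<bar>c k\<bar> / \<eta>) * norm (W k)"
    using mult_left_mono[OF below, of "\<bar>a k\<bar>"] mult_left_mono[OF above, of "\<bar>c k\<bar>"]
    by (simp add: algebra_simps)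
  finally have "norm (\<mu> - of_real (b k)) \<le> \<bar>a k\<bar> * \<eta> + \<bar>c k\<bar> / \<eta>"
    using k(2) by simp
  then have "norm (\<mu> - of_real (b k)) < b k"
    using dom k(1) by fastforce
  then have "Re \<mu> > 0"
    using abs_Re_le_cmod[of "\<mu> - of_real (b k)"] by simp
  then show ?thesis using \<open>s k > 0\<close> unfolding \<mu>_def by (simp add: Re_divide_of_real zero_less_divide_iff)
qed

lemma map_mat_id [simp]: "map_mat id A = A"
  by (rule eq_matI) simp_all

lemma invertible_mat_iff_det_nonzero:
  fixes A :: "'a::field mat"
  assumes A: "A \<in> carrier_mat n n"
  shows "invertible_mat A \<longleftrightarrow> det A \<noteq> 0"
proof
  assume "invertible_mat A"
  then obtain B where AB: "A * B = 1\<^sub>m (dim_row A)" and BA: "B * A = 1\<^sub>m (dim_row B)"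
    unfolding invertible_mat_def inverts_mat_def by auto
  have B: "B \<in> carrier_mat n n"
    using arg_cong[OF BA, of dim_col] arg_cong[OF AB, of dim_col] A by auto
  have "det A * det B = 1" using det_mult[OF A B] AB A by simp
  then show "det A \<noteq> 0" by auto
next
  assume "det A \<noteq> 0"
  from det_non_zero_imp_unit[OF A this, of "()"]
  obtain B where "B \<in> carrier_mat n n" "B * A = 1\<^sub>m n" "A * B = 1\<^sub>m n"
    unfolding Units_def ring_mat_def by auto
  then show "invertible_mat A" using A
    unfolding invertible_mat_def inverts_mat_def square_mat.simps by auto
qed

lemma det_zero_of_rows_dependent:
  fixes A :: "'a::field mat"
  assumes A: "A \<in> carrier_mat n n" and ij: "i < n" "j < n" "i \<noteq> j" and xy: "(x, y) \<noteq> (0, 0)"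
    and rows: "\<forall>c<n. x * A $$ (i, c) + y * A $$ (j, c) = 0"
  shows "det A = 0"
proof -
  define u where "u = vec n (\<lambda>r. (if r = i then x else 0) + (if r = j then y else 0))"
  have u: "u \<in> carrier_vec n" "u \<noteq> 0\<^sub>v n"
    using ij xy by (auto simp: u_def vec_eq_iff)
  have "transpose_mat A *\<^sub>v u = 0\<^sub>v n"
  proof (rule eq_vecI)
    fix c assume "c < dim_vec (0\<^sub>v n :: 'a vec)"
    then have c: "c < n" by simp
    have "(transpose_mat A *\<^sub>v u) $ c = (\<Sum>r<n. A $$ (r, c) * ((if r = i then x else 0) + (if r = j then y else 0)))"
      using A c by (simp add: scalar_prod_def u_def atLeast0LessThan)
    also have "\<dots> = (\<Sum>r<n. (if r = i then x * A $$ (i, c) else 0) + (if r = j then y * A $$ (j, c) else 0))"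
      by (intro sum.cong) (auto simp: algebra_simps)
    also have "\<dots> = x * A $$ (i, c) + y * A $$ (j, c)"
      using ij by (simp add: sum.distrib)
    finally show "(transpose_mat A *\<^sub>v u) $ c = 0\<^sub>v n $ c" using rows c by simp
  qed (use A in simp)
  then have "det (transpose_mat A) = 0"
    using det_0_iff_vec_prod_zero_field[of "transpose_mat A" n] A u by auto
  then show ?thesis using det_transpose[OF A] by simp
qed

lemma map_mat_of_real_mat_diag_mult_vec:
  fixes v :: "'b::real_algebra_1 vec"
  assumes "M \<in> carrier_mat n k" "v \<in> carrier_vec k" "i < n"
  shows "(map_mat of_real (mat_diag n d * M) *\<^sub>v v) $ i = d i *\<^sub>R (map_mat of_real M *\<^sub>v v) $ i"
  using assms by (simp add: mat_diag_mult_left scalar_prod_def scaleR_conv_of_real sum_distrib_left mult.assoc)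

section \<open>Collinearity along a path\<close>

text \<open>Minus the cross product of (Z (m-1) - Z m, P (m-1) - P m) and (Z (m+1) - Z m, P (m+1) - P m):
  it vanishes iff the points (Z k, P k), k = m-1, m, m+1, are collinear.\<close>

definition path_cross :: "(nat \<Rightarrow> real) \<Rightarrow> (nat \<Rightarrow> 'a::real_vector) \<Rightarrow> nat \<Rightarrow> 'a" where
  "path_cross Z P m = (Z (m + 1) - Z m) *\<^sub>R (P (m - 1) - P m) + (Z m - Z (m - 1)) *\<^sub>R (P (m + 1) - P m)"

lemma path_cross_cong:
  assumes "\<And>k. m - 1 \<le> k \<Longrightarrow> k \<le> m + 1 \<Longrightarrow> P k = Q k"
  shows "path_cross Z P m = path_cross Z Q m"
  unfolding path_cross_def by (simp add: assms)

lemma path_cross_zero [simp]: "path_cross Z (\<lambda>_. 0) m = 0"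
  by (simp add: path_cross_def)

lemma path_cross_one:
  "path_cross Z P 1 = (Z 2 - Z 1) *\<^sub>R (P 0 - P 1) + (Z 1 - Z 0) *\<^sub>R (P 2 - P 1)"
  unfolding path_cross_def one_add_one diff_self_eq_0 ..

lemma path_cross_sum_scaleR:
  fixes x :: "'c \<Rightarrow> 'a::real_vector"
  shows "path_cross Z (\<lambda>k. \<Sum>c\<in>C. f c k *\<^sub>R x c) m = (\<Sum>c\<in>C. path_cross Z (f c) m *\<^sub>R x c)"
  by (simp add: path_cross_def scaleR_sum_right sum_subtractf[symmetric] sum.distrib[symmetric]
      algebra_simps)

lemma path_cross_extend_line:
  assumes "path_cross Z P m = 0" "Z m \<noteq> Z (m - 1)"
    and "P (m - 1) = (Z (m - 1) - c) *\<^sub>R t" "P m = (Z m - c) *\<^sub>R t"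
  shows "P (m + 1) = (Z (m + 1) - c) *\<^sub>R t"
proof -
  have "(Z m - Z (m - 1)) *\<^sub>R (P (m + 1) - (Z (m + 1) - c) *\<^sub>R t) = path_cross Z P m"
    unfolding path_cross_def assms(3,4) by (simp add: algebra_simps)
  then show ?thesis using assms(1,2) by simp
qed

lemma path_cross_kernel_collinear:
  fixes P :: "nat \<Rightarrow> 'a::real_vector"
  assumes "l \<ge> 2" and steps: "\<forall>m\<in>{2..l}. Z m \<noteq> Z (m - 1)"
    and "P 0 = 0" and ker: "\<forall>m\<in>{1..l}. path_cross Z P m = 0"
  shows "\<exists>t. \<forall>k\<in>{1..l + 1}. P k = (Z k - Z 0) *\<^sub>R t"
proof -
  define t where "t = inverse (Z 2 - Z 1) *\<^sub>R (P 2 - P 1)"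
  have "Z 2 \<noteq> Z 1" using steps assms(1) by (metis atLeastAtMost_iff diff_add_inverse2 le_refl one_add_one)
  then have t: "P 2 - P 1 = (Z 2 - Z 1) *\<^sub>R t" unfolding t_def by simp
  have "path_cross Z P 1 = (Z 2 - Z 1) *\<^sub>R (- P 1) + (Z 1 - Z 0) *\<^sub>R ((Z 2 - Z 1) *\<^sub>R t)"
    unfolding path_cross_one using \<open>P 0 = 0\<close> t by simp
  also have "\<dots> = - (Z 2 - Z 1) *\<^sub>R (P 1 - (Z 1 - Z 0) *\<^sub>R t)"
    by (simp add: algebra_simps)
  finally have P1: "P 1 = (Z 1 - Z 0) *\<^sub>R t" using ker assms(1) \<open>Z 2 \<noteq> Z 1\<close> by auto
  have line: "P (k - 1) = (Z (k - 1) - Z 0) *\<^sub>R t \<and> P k = (Z k - Z 0) *\<^sub>R t" if "2 \<le> k" "k \<le> l + 1" for k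
    using that
  proof (induction k rule: dec_induct)
    case base
    have "P 2 = (P 2 - P 1) + P 1" by simp
    also have "\<dots> = (Z 2 - Z 0) *\<^sub>R t" unfolding t unfolding P1 by (simp add: algebra_simps)
    finally show ?case using P1 by simp
  next
    case (step k)
    then show ?case using path_cross_extend_line[of Z P k] ker steps by auto
  qed
  have "P k = (Z k - Z 0) *\<^sub>R t" if "k \<in> {1..l + 1}" for k
    using that line[of 2] line[of k] assms(1) by (cases "k = 1") auto
  then show ?thesis by blast
qed

lemma path_cross_kernel_trivial:
  fixes P :: "nat \<Rightarrow> 'a::real_vector"
  assumes ends: "Z (l + 1) \<noteq> Z 0" and steps: "\<forall>m\<in>{2..l}. Z m \<noteq> Z (m - 1)"
    and bdry: "P 0 = 0" "P (l + 1) = 0" and ker: "\<forall>m\<in>{1..l}. path_cross Z P m = 0"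
  shows "\<forall>k\<in>{1..l}. P k = 0"
proof -
  consider "l = 0" | "l = 1" | "l \<ge> 2" by linarith
  then show ?thesis
  proof cases
    case 2
    have "P 2 = 0" using bdry(2) unfolding 2 one_add_one .
    then have "(Z 2 - Z 0) *\<^sub>R P 1 = - path_cross Z P 1"
      unfolding path_cross_one using bdry(1) by (simp add: algebra_simps)
    then show ?thesis using ker ends 2 by (simp add: numeral_2_eq_2)
  next
    case 3
    obtain t where line: "\<forall>k\<in>{1..l + 1}. P k = (Z k - Z 0) *\<^sub>R t"
      using path_cross_kernel_collinear[OF 3 steps bdry(1) ker] by blast
    then have "(Z (l + 1) - Z 0) *\<^sub>R t = 0" using bdry(2) by simp
    then show ?thesis using line ends by simp
  qed simp
qed

lemma path_cross_kernel_nontrivial: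
  assumes "l \<ge> 1" and ends: "Z (l + 1) = Z 0"
  shows "\<exists>P :: nat \<Rightarrow> real. P 0 = 0 \<and> P (l + 1) = 0 \<and> (\<exists>k\<in>{1..l}. P k \<noteq> 0) \<and>
    (\<forall>m\<in>{1..l}. path_cross Z P m = 0)"
proof (cases "\<exists>k\<in>{1..l}. Z k \<noteq> Z 0")
  case True
  have "path_cross Z (\<lambda>k. Z k - Z 0) m = 0" for m
    by (simp add: path_cross_def algebra_simps)
  then show ?thesis using True ends by (intro exI[of _ "\<lambda>k. Z k - Z 0"]) simp
next
  case False
  have const: "Z k = Z 0" if "k \<le> l + 1" for k
  proof (cases "k \<in> {1..l}")
    case out: False
    then have "k = 0 \<or> k = l + 1" using that by auto
    then show ?thesis using ends by blast
  qed (use False in blast)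
  have ker: "path_cross Z P m = 0" if "m \<in> {1..l}" for P :: "nat \<Rightarrow> real" and m
  proof -
    have "m - 1 \<le> l + 1" "m \<le> l + 1" "m + 1 \<le> l + 1" using that by auto
    then have "Z (m - 1) = Z 0" "Z m = Z 0" "Z (m + 1) = Z 0" using const by blast+
    then show ?thesis by (simp add: path_cross_def)
  qed
  define P :: "nat \<Rightarrow> real" where "P k = (if k = 1 then 1 else 0)" for k
  have "P 0 = 0" "P (l + 1) = 0" "1 \<in> {1..l}" "P 1 \<noteq> 0" using assms(1) by (auto simp: P_def)
  then show ?thesis using ker by blast
qed

lemma path_cross_rows_dependent:
  assumes "Z m = Z (m - 1)" "m \<ge> 2"
  shows "\<exists>\<alpha> \<beta>. (\<alpha>, \<beta>) \<noteq> (0, 0) \<and>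
    (\<forall>P :: nat \<Rightarrow> real. \<alpha> * path_cross Z P (m - 1) + \<beta> * path_cross Z P m = 0)"
proof -
  define A where "A = Z (m + 1) - Z m"
  define B where "B = Z (m - 1) - Z (m - 2)"
  have rows: "path_cross Z P (m - 1) = B * (P m - P (m - 1))" "path_cross Z P m = A * (P (m - 1) - P m)"
    for P :: "nat \<Rightarrow> real"
    using assms by (simp_all add: path_cross_def A_def B_def numeral_2_eq_2 Suc_diff_Suc)
  show ?thesis
  proof (cases "(A, B) = (0, 0)")
    case True
    then show ?thesis unfolding rows by (intro exI[of _ 1] exI[of _ 0]) simp
  next
    case False
    then show ?thesis unfolding rows by (intro exI[of _ A] exI[of _ B]) (simp add: algebra_simps)
  qed
qed

section \<open>Diagonal stabilization along a path\<close>

text \<open>Vanishes iff (Z k, P k) and (Z (k+1), P (k+1)) lie on a common line through (Z 0, 0).\<close>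

definition path_transform :: "(nat \<Rightarrow> real) \<Rightarrow> (nat \<Rightarrow> 'a::real_vector) \<Rightarrow> nat \<Rightarrow> 'a" where
  "path_transform Z P k = (Z (k + 1) - Z 0) *\<^sub>R P k - (Z k - Z 0) *\<^sub>R P (k + 1)"

lemma path_transform_zero_imp_zero:
  assumes "\<forall>k\<in>{2..l+1}. Z k \<noteq> Z 0" "P (l + 1) = 0" "\<forall>k\<in>{1..l}. path_transform Z P k = 0"
  shows "\<forall>k\<in>{1..l}. P k = 0"
proof
  fix k assume "k \<in> {1..l}"
  then have "k \<le> l + 1" by simp
  then show "P k = 0"
  proof (induction rule: inc_induct)
    case (step n)
    then have "n \<in> {1..l}" "n + 1 \<in> {2..l+1}" using \<open>k \<in> {1..l}\<close> by auto
    then show ?case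
      using assms(1)[rule_format, of "n + 1"] assms(3)[rule_format, of n] step.IH
      by (simp add: path_transform_def)
  qed (use assms in simp)
qed

text \<open>At k = 1 the denominator would be Z 1 - Z 0, which may vanish (nothing constrains leader 1
  against its neighbour 3); row 1 is handled with P 0 = 0 instead.\<close>

definition path_gain :: "(nat \<Rightarrow> real) \<Rightarrow> nat \<Rightarrow> real" where
  "path_gain Z k = (if k = 1 then 1 else (Z k - Z 0) / (Z k - Z (k - 1)))"

definition path_ratio :: "(nat \<Rightarrow> real) \<Rightarrow> nat \<Rightarrow> real" where
  "path_ratio Z k = (if k = 1 then 0 else (Z (k + 1) - Z k) / (Z k - Z (k - 1)))"

lemma path_cross_bidiagonal:
  assumes "P 0 = 0" "k \<ge> 1" "k \<ge> 2 \<Longrightarrow> Z k \<noteq> Z (k - 1)"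
  shows "path_gain Z k *\<^sub>R path_cross Z P k = path_ratio Z k *\<^sub>R path_transform Z P (k - 1) - path_transform Z P k"
proof (cases "k = 1")
  case True
  then show ?thesis using assms(1)
    unfolding True path_gain_def path_ratio_def path_transform_def path_cross_one
    by (simp add: algebra_simps numeral_2_eq_2)
next
  case False
  define d where "d = Z k - Z (k - 1)"
  have "d \<noteq> 0" "k - 1 + 1 = k" using assms(2,3) False unfolding d_def by auto
  have "path_gain Z k *\<^sub>R path_cross Z P k = inverse d *\<^sub>R ((Z k - Z 0) *\<^sub>R path_cross Z P k)"
    using False by (simp add: path_gain_def d_def divide_inverse mult.commute)
  also have "(Z k - Z 0) *\<^sub>R path_cross Z P k =
      (Z (k + 1) - Z k) *\<^sub>R path_transform Z P (k - 1) - d *\<^sub>R path_transform Z P k"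
    using \<open>k - 1 + 1 = k\<close> unfolding path_cross_def path_transform_def d_def by (simp add: algebra_simps)
  also have "inverse d *\<^sub>R \<dots> = path_ratio Z k *\<^sub>R path_transform Z P (k - 1) - path_transform Z P k"
    using False \<open>d \<noteq> 0\<close> by (simp add: path_ratio_def d_def divide_inverse mult.commute scaleR_diff_right)
  finally show ?thesis .
qed

text \<open>Row k scaled by path_scaling \<epsilon> Z k is of order \<epsilon>^k in the coordinates path_transform Z P;
  the coupling to row k+1 is then of relative order \<epsilon>.\<close>

definition path_scaling :: "real \<Rightarrow> (nat \<Rightarrow> real) \<Rightarrow> nat \<Rightarrow> real" where
  "path_scaling \<epsilon> Z k = - (\<epsilon> ^ k * path_gain Z k / (Z (k + 1) - Z 0))"

lemma path_scaling_cross: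
  assumes "P 0 = 0" "k \<ge> 1" "k \<ge> 2 \<Longrightarrow> Z k \<noteq> Z (k - 1)" "Z (k + 1) \<noteq> Z 0"
  shows "(Z (k + 1) - Z 0) *\<^sub>R (path_scaling \<epsilon> Z k *\<^sub>R path_cross Z P k) =
    \<epsilon> ^ k *\<^sub>R (path_transform Z P k - path_ratio Z k *\<^sub>R path_transform Z P (k - 1))"
proof -
  have "(Z (k + 1) - Z 0) *\<^sub>R (path_scaling \<epsilon> Z k *\<^sub>R path_cross Z P k) =
      (- (\<epsilon> ^ k)) *\<^sub>R (path_gain Z k *\<^sub>R path_cross Z P k)"
    using assms(4) by (simp add: path_scaling_def)
  also have "\<dots> = (- (\<epsilon> ^ k)) *\<^sub>R (path_ratio Z k *\<^sub>R path_transform Z P (k - 1) - path_transform Z P k)"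
    using path_cross_bidiagonal[where P = P and k = k and Z = Z, OF assms(1-3)] by simp
  finally show ?thesis by (simp add: algebra_simps)
qed

lemma path_cross_eigenvalue_Re_pos:
  fixes Z :: "nat \<Rightarrow> real"
  assumes ends: "Z (l + 1) \<noteq> Z 0" and steps: "\<forall>k\<in>{2..l}. Z k \<noteq> Z (k - 1)"
    and spread: "\<forall>k\<in>{2..l}. Z k \<noteq> Z 0"
  shows "\<exists>\<delta>. \<forall>ev (P :: nat \<Rightarrow> complex). P 0 = 0 \<longrightarrow> P (l + 1) = 0 \<longrightarrow> (\<exists>k\<in>{1..l}. P k \<noteq> 0) \<longrightarrow>
    (\<forall>m\<in>{1..l}. ev * P m = \<delta> m *\<^sub>R path_cross Z P m) \<longrightarrow> Re ev > 0"
proof -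
  define y where "y k = Z k - Z 0" for k
  have y_nz: "y k \<noteq> 0" if "k \<in> {2..l+1}" for k
    using that ends spread unfolding y_def by (cases "k = l + 1") auto
  define \<alpha> where "\<alpha> = path_ratio Z"
  define \<rho> where "\<rho> k = (if k < l then y k / y (k + 2) else 0)" for k
  obtain \<eta> :: real where "\<eta> > 0"
    and small: "\<forall>k\<in>{1..l}. \<eta> * (\<bar>\<alpha> k\<bar> + \<bar>\<rho> k\<bar>) + \<eta>\<^sup>2 * (- \<rho> k * \<alpha> (k + 1)) < 1"
    using ex_pos_small_quadratic[of "{1..l}" "\<lambda>k. \<bar>\<alpha> k\<bar> + \<bar>\<rho> k\<bar>" "\<lambda>k. - \<rho> k * \<alpha> (k + 1)"]
    by auto
  define \<epsilon> where "\<epsilon> = \<eta>\<^sup>2"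
  have "Re ev > 0"
    if P0: "P 0 = 0" and Pl: "P (l + 1) = 0" and nz: "\<exists>k\<in>{1..l}. P k \<noteq> 0"
      and eq: "\<forall>m\<in>{1..l}. ev * P m = path_scaling \<epsilon> Z m *\<^sub>R path_cross Z P m" for ev and P :: "nat \<Rightarrow> complex"
  proof -
    define W where "W k = (if k \<le> l then path_transform Z P k else 0)" for k
    have row: "y (k + 1) *\<^sub>R (ev * P k) = \<epsilon> ^ k *\<^sub>R (W k - \<alpha> k *\<^sub>R W (k - 1))" if "k \<in> {1..l}" for k
    proof -
      have k: "1 \<le> k" "k \<le> l" "k - 1 \<le> l" "k \<ge> 2 \<Longrightarrow> Z k \<noteq> Z (k - 1)" using that steps by auto
      then show ?thesis
        using eq path_scaling_cross[where P = P and k = k and Z = Z and \<epsilon> = \<epsilon>, OF P0 k(1) k(4)] y_nz[of "k + 1"]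
        by (simp add: W_def \<alpha>_def y_def)
    qed
    have eig: "ev * W k = \<epsilon> ^ k *\<^sub>R ((- \<alpha> k) *\<^sub>R W (k - 1) + (1 + \<epsilon> * \<rho> k * \<alpha> (k + 1)) *\<^sub>R W k
        + (- \<epsilon> * \<rho> k) *\<^sub>R W (k + 1))" if "k \<in> {1..l}" for k
    proof -
      have "ev * W k = y (k + 1) *\<^sub>R (ev * P k) - y k *\<^sub>R (ev * P (k + 1))"
        using that by (simp add: W_def path_transform_def y_def algebra_simps)
      also have "y (k + 1) *\<^sub>R (ev * P k) = \<epsilon> ^ k *\<^sub>R (W k - \<alpha> k *\<^sub>R W (k - 1))"
        by (rule row[OF that])
      also have "y k *\<^sub>R (ev * P (k + 1)) = \<epsilon> ^ k *\<^sub>R ((\<epsilon> * \<rho> k) *\<^sub>R (W (k + 1) - \<alpha> (k + 1) *\<^sub>R W k))"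
      proof (cases "k < l")
        case True
        then have "y k *\<^sub>R (ev * P (k + 1)) = \<rho> k *\<^sub>R (y (k + 2) *\<^sub>R (ev * P (k + 1)))"
          using y_nz[of "k + 2"] by (simp add: \<rho>_def)
        also have "\<dots> = \<rho> k *\<^sub>R \<epsilon> ^ (k + 1) *\<^sub>R (W (k + 1) - \<alpha> (k + 1) *\<^sub>R W k)"
          using row[of "k + 1"] True by (simp add: add.assoc)
        finally show ?thesis by (simp add: mult.commute mult.left_commute)
      qed (use Pl that in \<open>simp add: \<rho>_def\<close>)
      finally show ?thesis by (simp add: algebra_simps)
    qed
    have "\<bar>- \<epsilon> * \<rho> k\<bar> / \<eta> = \<eta> * \<bar>\<rho> k\<bar>" for k
      using \<open>\<eta> > 0\<close> by (simp add: \<epsilon>_def abs_mult power2_eq_square)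
    then have dominance: "\<forall>k\<in>{1..l}. \<bar>- \<alpha> k\<bar> * \<eta> + \<bar>- \<epsilon> * \<rho> k\<bar> / \<eta> < 1 + \<epsilon> * \<rho> k * \<alpha> (k + 1)"
      using small by (simp add: \<epsilon>_def algebra_simps)
    have W_bdry: "W 0 = 0" "W (l + 1) = 0" by (simp_all add: W_def path_transform_def P0)
    have W_nz: "\<exists>k\<in>{1..l}. W k \<noteq> 0"
      using path_transform_zero_imp_zero[of l Z P] y_nz Pl nz by (auto simp: W_def y_def)
    have "\<forall>k\<in>{1..l}. \<epsilon> ^ k > 0 \<and> ev * W k = \<epsilon> ^ k *\<^sub>R ((- \<alpha> k) *\<^sub>R W (k - 1)
        + (1 + \<epsilon> * \<rho> k * \<alpha> (k + 1)) *\<^sub>R W k + (- \<epsilon> * \<rho> k) *\<^sub>R W (k + 1))"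
      using eig \<open>\<eta> > 0\<close> by (simp add: \<epsilon>_def)
    from eigenvalue_Re_pos_of_weighted_dominance[OF \<open>\<eta> > 0\<close> W_bdry W_nz this dominance]
    show ?thesis .
  qed
  then show ?thesis by blast
qed

section \<open>The follower block of the dual-entry path\<close>

definition rotated_coord :: "real \<Rightarrow> (nat \<Rightarrow> real) \<Rightarrow> (nat \<Rightarrow> real) \<Rightarrow> (nat \<Rightarrow> real) \<Rightarrow> nat \<Rightarrow> nat \<Rightarrow> real"
  where "rotated_coord \<theta> px py phi a v =
    (if a = 0 then rot_px \<theta> px py v else if a = 1 then rot_py \<theta> px py v else phi v)"

lemma wdiag_eq_rotated_coord_diff:
  "wdiag \<theta> px py phi u v a = rotated_coord \<theta> px py phi a u - rotated_coord \<theta> px py phi a v"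
  by (simp add: wdiag_def rotated_coord_def)

lemma wprod_nonzero_iff:
  "wprod \<theta> px py phi u v \<noteq> 0 \<longleftrightarrow> (\<forall>a<3. rotated_coord \<theta> px py phi a v \<noteq> rotated_coord \<theta> px py phi a u)"
  by (auto simp: wprod_def rotated_coord_def numeral_3_eq_3 less_Suc_eq)

definition path_vertex :: "nat \<Rightarrow> nat \<Rightarrow> nat" where
  "path_vertex l k = (if k = 0 then 1 else if k = l + 1 then 2 else k + 2)"

definition path_coord :: "real \<Rightarrow> (nat \<Rightarrow> real) \<Rightarrow> (nat \<Rightarrow> real) \<Rightarrow> (nat \<Rightarrow> real) \<Rightarrow> nat \<Rightarrow> nat \<Rightarrow> nat \<Rightarrow> real"
  where "path_coord \<theta> px py phi l a k = rotated_coord \<theta> px py phi a (path_vertex l k)"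

text \<open>C orders the two neighbours i < j of a follower; only at the last follower with l \<ge> 2
  (neighbours l+1 and 2) is this against the path order, and swapping i and j negates the
  summand of Mhat.\<close>

definition path_sign :: "nat \<Rightarrow> nat \<Rightarrow> real" where
  "path_sign l m = (if 2 \<le> l \<and> m = l then -1 else 1)"

lemma path_sign_square [simp]: "path_sign l m * path_sign l m = 1"
  by (simp add: path_sign_def)

lemma path_sign_mult_cancel [simp]: "path_sign l m * (path_sign l m * x) = x"
  by (simp add: path_sign_def)

lemma path_sign_nonzero [simp]: "path_sign l m \<noteq> 0"
  by (simp add: path_sign_def)

lemma triples_dual_entry_path:
  assumes "1 \<le> m" "m \<le> l"
  shows "{(i, j). (i, j, m + 2) \<in> triples (l + 2) (dual_entry_path l)} =
    {(min (path_vertex l (m - 1)) (path_vertex l (m + 1)), max (path_vertex l (m - 1)) (path_vertex l (m + 1)))}"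
proof -
  have "(i, m + 2) \<in> dual_entry_path l \<longleftrightarrow> i = path_vertex l (m - 1) \<or> i = path_vertex l (m + 1)" for i
    using assms unfolding dual_entry_path_def path_vertex_def by auto
  moreover have "path_vertex l (m - 1) \<noteq> path_vertex l (m + 1)"
    "path_vertex l (m - 1) \<in> {1..l + 2}" "path_vertex l (m + 1) \<in> {1..l + 2}"
    using assms unfolding path_vertex_def by auto
  ultimately show ?thesis using assms unfolding triples_def by (auto simp: min_def max_def)
qed

lemma Mhat_apply_dual_entry_path:
  assumes m: "1 \<le> m" "m \<le> l" and a: "a < 3"
  shows "Mhat_apply (l + 2) (dual_entry_path l) \<theta> px py phi x $ (3 * (m + 1) + a) =
    path_sign l m * path_cross (path_coord \<theta> px py phi l a) (\<lambda>k. blk x (path_vertex l k) a) m"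
proof -
  let ?u = "path_vertex l (m - 1)" and ?v = "path_vertex l (m + 1)"
  let ?w = "wdiag \<theta> px py phi" and ?x = "\<lambda>i. blk x i a"
  have r: "3 * (m + 1) + a < 3 * (l + 2)" "(3 * (m + 1) + a) div 3 + 1 = m + 2" "(3 * (m + 1) + a) mod 3 = a"
    using m a by presburger+
  have vm: "m + 2 = path_vertex l m" using m by (simp add: path_vertex_def)
  have Mhat_row: "Mhat_apply (l + 2) (dual_entry_path l) \<theta> px py phi x $ (3 * (m + 1) + a) =
      ?w (max ?u ?v) (path_vertex l m) a * (?x (min ?u ?v) - ?x (path_vertex l m))
      + ?w (path_vertex l m) (min ?u ?v) a * (?x (max ?u ?v) - ?x (path_vertex l m))"
    unfolding Mhat_apply_def index_vec[OF r(1)] Let_def r(2,3) triples_dual_entry_path[OF m]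
    unfolding vm by simp
  consider "min ?u ?v = ?u" "max ?u ?v = ?v" "path_sign l m = 1"
    | "min ?u ?v = ?v" "max ?u ?v = ?u" "path_sign l m = -1"
  proof (cases "2 \<le> l \<and> m = l")
    case True
    then show ?thesis by (intro that(2)) (auto simp: path_vertex_def path_sign_def)
  next
    case False
    then show ?thesis using m by (intro that(1)) (auto simp: path_vertex_def path_sign_def)
  qed
  then show ?thesis
    unfolding Mhat_row wdiag_eq_rotated_coord_diff path_cross_def path_coord_def
    by cases (simp_all add: algebra_simps)
qed

definition follower_seq :: "nat \<Rightarrow> nat \<Rightarrow> 'a::zero vec \<Rightarrow> nat \<Rightarrow> 'a" where
  "follower_seq l a v k = (if 1 \<le> k \<and> k \<le> l then v $ (3 * (k - 1) + a) else 0)"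

lemma follower_seq_boundary [simp]: "follower_seq l a v 0 = 0" "follower_seq l a v (l + 1) = 0"
  by (simp_all add: follower_seq_def)

lemma all_follower_index_iff:
  fixes l :: nat
  shows "(\<forall>r<3 * l. Q r) \<longleftrightarrow> (\<forall>a<3. \<forall>m\<in>{1..l}. Q (3 * (m - 1) + a))"
proof
  assume "\<forall>a<3. \<forall>m\<in>{1..l}. Q (3 * (m - 1) + a)"
  moreover have "r = 3 * (r div 3 + 1 - 1) + r mod 3" "r div 3 + 1 \<in> {1..l}" if "r < 3 * l" for r
    using that by auto
  ultimately show "\<forall>r<3 * l. Q r" by (metis mod_less_divisor zero_less_numeral)
qed auto

lemma follower_seq_nonzero:
  assumes "v \<in> carrier_vec (3 * l)" "v \<noteq> 0\<^sub>v (3 * l)"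
  shows "\<exists>a<3. \<exists>k\<in>{1..l}. follower_seq l a v k \<noteq> 0"
proof -
  have "\<not> (\<forall>r<3 * l. v $ r = 0)" using assms by (auto simp: vec_eq_iff)
  then show ?thesis unfolding all_follower_index_iff by (auto simp: follower_seq_def)
qed

lemma follower_seq_unit_vec:
  assumes "a < 3" "c < 3 * l"
  shows "follower_seq l a (unit_vec (3 * l) c) k = (if 1 \<le> k \<and> k \<le> l \<and> c = 3 * (k - 1) + a then 1 else 0)"
  using assms by (auto simp: follower_seq_def)

lemma follower_seq_eq_sum_unit_vec:
  fixes v :: "'b::real_vector vec"
  assumes "a < 3" "v \<in> carrier_vec (3 * l)"
  shows "follower_seq l a v k = (\<Sum>c<3 * l. follower_seq l a (unit_vec (3 * l) c) k *\<^sub>R v $ c)"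
proof -
  have "(\<Sum>c<3 * l. follower_seq l a (unit_vec (3 * l) c) k *\<^sub>R v $ c) =
      (\<Sum>c<3 * l. if 1 \<le> k \<and> k \<le> l \<and> c = 3 * (k - 1) + a then v $ c else 0)"
    using assms(1) by (intro sum.cong) (simp_all add: follower_seq_unit_vec)
  also have "\<dots> = follower_seq l a v k"
    using assms(1) by (auto simp: follower_seq_def sum.delta')
  finally show ?thesis ..
qed

lemma blk_unit_vec_path_vertex:
  assumes "k \<le> l + 1" "a < 3" "c < 3 * l"
  shows "blk (unit_vec (3 * (l + 2)) (c + 6)) (path_vertex l k) a = follower_seq l a (unit_vec (3 * l) c) k"
  using assms by (auto simp: blk_def path_vertex_def follower_seq_def)

lemma Mff_carrier_mat: "Mff (l + 2) E \<theta> px py phi \<in> carrier_mat (3 * l) (3 * l)"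
  by (simp add: Mff_def)

lemma Mff_dual_entry_path_entry:
  assumes m: "1 \<le> m" "m \<le> l" and a: "a < 3" and c: "c < 3 * l"
  shows "Mff (l + 2) (dual_entry_path l) \<theta> px py phi $$ (3 * (m - 1) + a, c) =
    path_sign l m * path_cross (path_coord \<theta> px py phi l a) (follower_seq l a (unit_vec (3 * l) c)) m"
proof -
  let ?r = "3 * (m - 1) + a"
  have r: "?r < 3 * l" "?r + 6 = 3 * (m + 1) + a" using m a by auto
  have "Mff (l + 2) (dual_entry_path l) \<theta> px py phi $$ (?r, c) =
      Mhat (l + 2) (dual_entry_path l) \<theta> px py phi $$ (?r + 6, c + 6)"
    using r c by (simp add: Mff_def)
  also have "\<dots> = Mhat_apply (l + 2) (dual_entry_path l) \<theta> px py phi (unit_vec (3 * (l + 2)) (c + 6))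
      $ (3 * (m + 1) + a)"
    unfolding r(2)[symmetric] using r c by (simp add: Mhat_def)
  also have "\<dots> = path_sign l m * path_cross (path_coord \<theta> px py phi l a)
      (\<lambda>k. blk (unit_vec (3 * (l + 2)) (c + 6)) (path_vertex l k) a) m"
    by (rule Mhat_apply_dual_entry_path[OF m a])
  also have "path_cross (path_coord \<theta> px py phi l a) (\<lambda>k. blk (unit_vec (3 * (l + 2)) (c + 6)) (path_vertex l k) a) m =
      path_cross (path_coord \<theta> px py phi l a) (follower_seq l a (unit_vec (3 * l) c)) m"
    using m a c by (intro path_cross_cong blk_unit_vec_path_vertex) auto
  finally show ?thesis .
qed

lemma Mff_dual_entry_path_mult_vec:
  fixes v :: "'b::real_algebra_1 vec"
  assumes m: "1 \<le> m" "m \<le> l" and a: "a < 3" and v: "v \<in> carrier_vec (3 * l)"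
  shows "(map_mat of_real (Mff (l + 2) (dual_entry_path l) \<theta> px py phi) *\<^sub>v v) $ (3 * (m - 1) + a) =
    path_sign l m *\<^sub>R path_cross (path_coord \<theta> px py phi l a) (follower_seq l a v) m"
proof -
  let ?M = "Mff (l + 2) (dual_entry_path l) \<theta> px py phi" and ?r = "3 * (m - 1) + a"
  let ?Z = "path_coord \<theta> px py phi l a" and ?e = "\<lambda>c. follower_seq l a (unit_vec (3 * l) c)"
  have "?r < 3 * l" using m a by auto
  then have "(map_mat of_real ?M *\<^sub>v v) $ ?r = (\<Sum>c<3 * l. ?M $$ (?r, c) *\<^sub>R v $ c)"
    using v by (simp add: Mff_def scalar_prod_def scaleR_conv_of_real atLeast0LessThan)
  also have "\<dots> = (\<Sum>c<3 * l. path_sign l m *\<^sub>R (path_cross ?Z (?e c) m *\<^sub>R v $ c))"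
    using Mff_dual_entry_path_entry[OF m a] by (intro sum.cong) simp_all
  also have "\<dots> = path_sign l m *\<^sub>R path_cross ?Z (\<lambda>k. \<Sum>c<3 * l. ?e c k *\<^sub>R v $ c) m"
    by (simp add: path_cross_sum_scaleR scaleR_sum_right)
  also have "\<dots> = path_sign l m *\<^sub>R path_cross ?Z (follower_seq l a v) m"
    unfolding follower_seq_eq_sum_unit_vec[OF a v, symmetric] ..
  finally show ?thesis .
qed

lemma Mff_dual_entry_path_mult_vec_eq_zero_iff:
  fixes v :: "'b::real_algebra_1 vec"
  assumes v: "v \<in> carrier_vec (3 * l)"
  shows "map_mat of_real (Mff (l + 2) (dual_entry_path l) \<theta> px py phi) *\<^sub>v v = 0\<^sub>v (3 * l) \<longleftrightarrow>
    (\<forall>a<3. \<forall>m\<in>{1..l}. path_cross (path_coord \<theta> px py phi l a) (follower_seq l a v) m = 0)"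
proof -
  let ?Mv = "map_mat of_real (Mff (l + 2) (dual_entry_path l) \<theta> px py phi) *\<^sub>v v"
  have "?Mv = 0\<^sub>v (3 * l) \<longleftrightarrow> (\<forall>r<3 * l. ?Mv $ r = 0)"
    by (auto simp: vec_eq_iff Mff_def)
  also have "\<dots> \<longleftrightarrow> (\<forall>a<3. \<forall>m\<in>{1..l}. ?Mv $ (3 * (m - 1) + a) = 0)"
    by (rule all_follower_index_iff)
  finally have "?Mv = 0\<^sub>v (3 * l) \<longleftrightarrow> (\<forall>a<3. \<forall>m\<in>{1..l}. ?Mv $ (3 * (m - 1) + a) = 0)" .
  moreover have "?Mv $ (3 * (m - 1) + a) = 0 \<longleftrightarrow>
      path_cross (path_coord \<theta> px py phi l a) (follower_seq l a v) m = 0" if "a < 3" "m \<in> {1..l}" for a m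
    using Mff_dual_entry_path_mult_vec[of m l a v] that v by simp
  ultimately show ?thesis by blast
qed

lemma det_Mff_dual_entry_path_nonzero:
  assumes "\<forall>a<3. path_coord \<theta> px py phi l a (l + 1) \<noteq> path_coord \<theta> px py phi l a 0 \<and>
    (\<forall>m\<in>{2..l}. path_coord \<theta> px py phi l a m \<noteq> path_coord \<theta> px py phi l a (m - 1))"
  shows "det (Mff (l + 2) (dual_entry_path l) \<theta> px py phi) \<noteq> 0"
proof
  let ?M = "Mff (l + 2) (dual_entry_path l) \<theta> px py phi"
  assume "det ?M = 0"
  then obtain v :: "real vec" where v: "v \<in> carrier_vec (3 * l)" "v \<noteq> 0\<^sub>v (3 * l)" "?M *\<^sub>v v = 0\<^sub>v (3 * l)"
    using det_0_iff_vec_prod_zero_field[OF Mff_carrier_mat] by blast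
  obtain a k where a: "a < 3" "k \<in> {1..l}" "follower_seq l a v k \<noteq> 0"
    using follower_seq_nonzero[OF v(1,2)] by blast
  have "\<forall>m\<in>{1..l}. path_cross (path_coord \<theta> px py phi l a) (follower_seq l a v) m = 0"
    using Mff_dual_entry_path_mult_vec_eq_zero_iff[OF v(1)] v(3) a(1) by simp
  then have "\<forall>k\<in>{1..l}. follower_seq l a v k = 0"
    using assms a(1) by (intro path_cross_kernel_trivial[OF _ _ follower_seq_boundary]) auto
  with a(2,3) show False by blast
qed

lemma det_Mff_dual_entry_path_zero_of_leaders:
  assumes "l \<ge> 1" "a < 3" "path_coord \<theta> px py phi l a (l + 1) = path_coord \<theta> px py phi l a 0"
  shows "det (Mff (l + 2) (dual_entry_path l) \<theta> px py phi) = 0"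
proof -
  let ?M = "Mff (l + 2) (dual_entry_path l) \<theta> px py phi" and ?Z = "path_coord \<theta> px py phi l"
  obtain P :: "nat \<Rightarrow> real" where P: "P 0 = 0" "P (l + 1) = 0" "\<exists>k\<in>{1..l}. P k \<noteq> 0"
    "\<forall>m\<in>{1..l}. path_cross (?Z a) P m = 0"
    using path_cross_kernel_nontrivial[OF assms(1,3)] by blast
  define v where "v = vec (3 * l) (\<lambda>r. if r mod 3 = a then P (r div 3 + 1) else 0)"
  have v: "v \<in> carrier_vec (3 * l)" by (simp add: v_def)
  have seq: "follower_seq l b v k = (if b = a then P k else 0)" if "b < 3" "k \<le> l + 1" for b k
    using that P(1,2) by (cases "k = 0 \<or> k = l + 1") (auto simp: follower_seq_def v_def)
  have "path_cross (?Z b) (follower_seq l b v) m = 0" if "b < 3" "m \<in> {1..l}" for b m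
  proof -
    have "path_cross (?Z b) (follower_seq l b v) m = path_cross (?Z b) (\<lambda>k. if b = a then P k else 0) m"
      using that by (intro path_cross_cong seq) auto
    then show ?thesis using P(4) that by (cases "b = a") auto
  qed
  then have "?M *\<^sub>v v = 0\<^sub>v (3 * l)"
    using Mff_dual_entry_path_mult_vec_eq_zero_iff[OF v] by simp
  moreover have "v \<noteq> 0\<^sub>v (3 * l)"
  proof
    assume "v = 0\<^sub>v (3 * l)"
    then have "follower_seq l a v k = 0" for k using assms(2) by (auto simp: follower_seq_def)
    then show False using P(3) seq[OF assms(2)] by force
  qed
  ultimately show ?thesis using det_0_iff_vec_prod_zero_field[OF Mff_carrier_mat] v by blast
qed

lemma det_Mff_dual_entry_path_zero_of_followers:
  assumes "a < 3" "2 \<le> m" "m \<le> l" "path_coord \<theta> px py phi l a m = path_coord \<theta> px py phi l a (m - 1)"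
  shows "det (Mff (l + 2) (dual_entry_path l) \<theta> px py phi) = 0"
proof -
  let ?Z = "path_coord \<theta> px py phi l a"
  obtain \<alpha> \<beta> :: real where \<alpha>\<beta>: "(\<alpha>, \<beta>) \<noteq> (0, 0)"
    "\<forall>P :: nat \<Rightarrow> real. \<alpha> * path_cross ?Z P (m - 1) + \<beta> * path_cross ?Z P m = 0"
    using path_cross_rows_dependent[of ?Z m] assms(2,4) by blast
  let ?M = "Mff (l + 2) (dual_entry_path l) \<theta> px py phi" and ?e = "\<lambda>c. follower_seq l a (unit_vec (3 * l) c)"
  let ?i = "3 * (m - 2) + a" and ?j = "3 * (m - 1) + a"
  have "?i < 3 * l" "?j < 3 * l" "?i \<noteq> ?j" using assms by auto
  moreover have "(\<alpha> * path_sign l (m - 1), \<beta> * path_sign l m) \<noteq> (0, 0)" using \<alpha>\<beta>(1) by auto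
  moreover have "\<forall>c<3 * l. (\<alpha> * path_sign l (m - 1)) * ?M $$ (?i, c) + (\<beta> * path_sign l m) * ?M $$ (?j, c) = 0"
  proof (intro allI impI)
    fix c assume "c < 3 * l"
    have "m - 1 - 1 = m - 2" using assms(2) by simp
    then have "?M $$ (?i, c) = path_sign l (m - 1) * path_cross ?Z (?e c) (m - 1)"
      using Mff_dual_entry_path_entry[of "m - 1" l a c] assms \<open>c < 3 * l\<close> by simp
    moreover have "?M $$ (?j, c) = path_sign l m * path_cross ?Z (?e c) m"
      using Mff_dual_entry_path_entry[of m l a c] assms \<open>c < 3 * l\<close> by simp
    ultimately show "(\<alpha> * path_sign l (m - 1)) * ?M $$ (?i, c) + (\<beta> * path_sign l m) * ?M $$ (?j, c) = 0"
      using \<alpha>\<beta>(2)[rule_format, of "?e c"] by (simp add: mult.assoc)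
  qed
  ultimately show ?thesis by (rule det_zero_of_rows_dependent[OF Mff_carrier_mat])
qed

lemma det_Mff_dual_entry_path_nonzero_iff:
  assumes "l \<ge> 1"
  shows "det (Mff (l + 2) (dual_entry_path l) \<theta> px py phi) \<noteq> 0 \<longleftrightarrow>
    (\<forall>a<3. path_coord \<theta> px py phi l a (l + 1) \<noteq> path_coord \<theta> px py phi l a 0 \<and>
      (\<forall>m\<in>{2..l}. path_coord \<theta> px py phi l a m \<noteq> path_coord \<theta> px py phi l a (m - 1)))"
  using det_Mff_dual_entry_path_nonzero det_Mff_dual_entry_path_zero_of_leaders[OF assms]
    det_Mff_dual_entry_path_zero_of_followers by fastforce

lemma Mff_dual_entry_path_diagonally_stabilizable:
  assumes "\<forall>a<3. path_coord \<theta> px py phi l a (l + 1) \<noteq> path_coord \<theta> px py phi l a 0 \<and>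
    (\<forall>m\<in>{2..l}. path_coord \<theta> px py phi l a m \<noteq> path_coord \<theta> px py phi l a (m - 1)) \<and>
    (\<forall>m\<in>{2..l}. path_coord \<theta> px py phi l a m \<noteq> path_coord \<theta> px py phi l a 0)"
  shows "\<exists>D :: real mat. D \<in> carrier_mat (3 * l) (3 * l) \<and> diagonal_mat D \<and>
    (\<forall>ev. eigenvalue (map_mat complex_of_real (D * Mff (l + 2) (dual_entry_path l) \<theta> px py phi)) ev \<longrightarrow> Re ev > 0)"
proof -
  let ?M = "Mff (l + 2) (dual_entry_path l) \<theta> px py phi" and ?Z = "path_coord \<theta> px py phi l"
  have "\<forall>a. \<exists>\<delta>. a < 3 \<longrightarrow> (\<forall>ev (P :: nat \<Rightarrow> complex). P 0 = 0 \<longrightarrow> P (l + 1) = 0 \<longrightarrow>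
      (\<exists>k\<in>{1..l}. P k \<noteq> 0) \<longrightarrow> (\<forall>m\<in>{1..l}. ev * P m = \<delta> m *\<^sub>R path_cross (?Z a) P m) \<longrightarrow> Re ev > 0)"
    using path_cross_eigenvalue_Re_pos assms by blast
  then obtain \<delta> where \<delta>: "\<And>a ev (P :: nat \<Rightarrow> complex). a < 3 \<Longrightarrow> P 0 = 0 \<Longrightarrow> P (l + 1) = 0 \<Longrightarrow>
      \<exists>k\<in>{1..l}. P k \<noteq> 0 \<Longrightarrow> \<forall>m\<in>{1..l}. ev * P m = \<delta> a m *\<^sub>R path_cross (?Z a) P m \<Longrightarrow> Re ev > 0"
    by metis
  define D where "D = mat_diag (3 * l) (\<lambda>i. path_sign l (i div 3 + 1) * \<delta> (i mod 3) (i div 3 + 1))"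
  have "Re ev > 0" if "eigenvalue (map_mat complex_of_real (D * ?M)) ev" for ev
  proof -
    obtain v where v: "v \<in> carrier_vec (3 * l)" "v \<noteq> 0\<^sub>v (3 * l)" "map_mat of_real (D * ?M) *\<^sub>v v = ev \<cdot>\<^sub>v v"
    proof -
      have "dim_row (map_mat complex_of_real (D * ?M)) = 3 * l"
        by (simp add: D_def mat_diag_def)
      then show ?thesis using that \<open>eigenvalue _ ev\<close> unfolding eigenvalue_def eigenvector_def by auto
    qed
    obtain a k where a: "a < 3" "k \<in> {1..l}" "follower_seq l a v k \<noteq> 0"
      using follower_seq_nonzero[OF v(1,2)] by blast
    have "ev * follower_seq l a v m = \<delta> a m *\<^sub>R path_cross (?Z a) (follower_seq l a v) m" if "m \<in> {1..l}" for m
    proof -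
      let ?i = "3 * (m - 1) + a"
      have i: "?i < 3 * l" "?i div 3 + 1 = m" "?i mod 3 = a" using that a by auto
      have "ev * follower_seq l a v m = (map_mat of_real (D * ?M) *\<^sub>v v) $ ?i"
        using v(1,3) i(1) that by (simp add: follower_seq_def)
      also have "\<dots> = (path_sign l m * \<delta> a m) *\<^sub>R (map_mat of_real ?M *\<^sub>v v) $ ?i"
        unfolding D_def map_mat_of_real_mat_diag_mult_vec[OF Mff_carrier_mat v(1) i(1)] i(2,3) ..
      also have "\<dots> = \<delta> a m *\<^sub>R path_cross (?Z a) (follower_seq l a v) m"
        using Mff_dual_entry_path_mult_vec[of m l a v] that a v(1) by simp
      finally show ?thesis .
    qed
    then show ?thesis using a(2,3) by (intro \<delta>[OF a(1) follower_seq_boundary]) auto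
  qed
  moreover have "diagonal_mat D" by (simp add: D_def diagonal_mat_def mat_diag_def)
  ultimately show ?thesis by (intro exI[of _ D]) (simp add: D_def)
qed

lemma wprod_path_vertex_nonzero_iff:
  "wprod \<theta> px py phi (path_vertex l j) (path_vertex l k) \<noteq> 0 \<longleftrightarrow>
    (\<forall>a<3. path_coord \<theta> px py phi l a k \<noteq> path_coord \<theta> px py phi l a j)"
  by (simp add: wprod_nonzero_iff path_coord_def)

lemma leader_condition_iff:
  "wprod \<theta> px py phi 1 2 \<noteq> 0 \<longleftrightarrow>
    (\<forall>a<3. path_coord \<theta> px py phi l a (l + 1) \<noteq> path_coord \<theta> px py phi l a 0)"
proof -
  have "path_vertex l 0 = 1" "path_vertex l (l + 1) = 2" by (simp_all add: path_vertex_def)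
  then show ?thesis using wprod_path_vertex_nonzero_iff[of \<theta> px py phi l 0 "l + 1"] by simp
qed

lemma follower_condition_iff:
  "(\<forall>r. 3 \<le> r \<and> r < l + 2 \<longrightarrow> wprod \<theta> px py phi r (r + 1) \<noteq> 0) \<longleftrightarrow>
    (\<forall>a<3. \<forall>m\<in>{2..l}. path_coord \<theta> px py phi l a m \<noteq> path_coord \<theta> px py phi l a (m - 1))"
proof -
  have "wprod \<theta> px py phi (m + 1) (m + 2) \<noteq> 0 \<longleftrightarrow>
      (\<forall>a<3. path_coord \<theta> px py phi l a m \<noteq> path_coord \<theta> px py phi l a (m - 1))" if "m \<in> {2..l}" for m
  proof -
    have "path_vertex l (m - 1) = m + 1" "path_vertex l m = m + 2" using that by (auto simp: path_vertex_def)
    then show ?thesis using wprod_path_vertex_nonzero_iff[of \<theta> px py phi l "m - 1" m] by simp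
  qed
  moreover have "(\<forall>r. 3 \<le> r \<and> r < l + 2 \<longrightarrow> Q r) \<longleftrightarrow> (\<forall>m\<in>{2..l}. Q (m + 1))" for Q
  proof
    assume "\<forall>m\<in>{2..l}. Q (m + 1)"
    show "\<forall>r. 3 \<le> r \<and> r < l + 2 \<longrightarrow> Q r"
    proof (intro allI impI)
      fix r assume "3 \<le> r \<and> r < l + 2"
      then have "r - 1 \<in> {2..l}" "r - 1 + 1 = r" by auto
      then show "Q r" using \<open>\<forall>m\<in>{2..l}. Q (m + 1)\<close> by metis
    qed
  qed auto
  ultimately show ?thesis by (auto simp: add.assoc)
qed

lemma leader_follower_condition_iff:
  "(\<forall>k. 4 \<le> k \<and> k \<le> l + 2 \<longrightarrow> wprod \<theta> px py phi 1 k \<noteq> 0) \<longleftrightarrow>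
    (\<forall>a<3. \<forall>m\<in>{2..l}. path_coord \<theta> px py phi l a m \<noteq> path_coord \<theta> px py phi l a 0)"
proof -
  have "wprod \<theta> px py phi 1 (m + 2) \<noteq> 0 \<longleftrightarrow>
      (\<forall>a<3. path_coord \<theta> px py phi l a m \<noteq> path_coord \<theta> px py phi l a 0)" if "m \<in> {2..l}" for m
  proof -
    have "path_vertex l 0 = 1" "path_vertex l m = m + 2" using that by (auto simp: path_vertex_def)
    then show ?thesis using wprod_path_vertex_nonzero_iff[of \<theta> px py phi l 0 m] by simp
  qed
  moreover have "(\<forall>k. 4 \<le> k \<and> k \<le> l + 2 \<longrightarrow> Q k) \<longleftrightarrow> (\<forall>m\<in>{2..l}. Q (m + 2))" for Q
  proof
    assume "\<forall>m\<in>{2..l}. Q (m + 2)"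
    show "\<forall>k. 4 \<le> k \<and> k \<le> l + 2 \<longrightarrow> Q k"
    proof (intro allI impI)
      fix k assume "4 \<le> k \<and> k \<le> l + 2"
      then have "k - 2 \<in> {2..l}" "k - 2 + 2 = k" by auto
      then show "Q k" using \<open>\<forall>m\<in>{2..l}. Q (m + 2)\<close> by metis
    qed
  qed auto
  ultimately show ?thesis by auto
qed

theorem lemma8:
  fixes l :: nat and \<theta> :: real and px py phi :: "nat \<Rightarrow> real"
  assumes "l \<ge> 1"
  defines "E \<equiv> dual_entry_path l"
  defines "M \<equiv> Mff (l + 2) E \<theta> px py phi"
  defines "cond \<equiv> wprod \<theta> px py phi 1 2 \<noteq> 0 \<and>
                   (\<forall>r. 3 \<le> r \<and> r < l + 2 \<longrightarrow> wprod \<theta> px py phi r (r + 1) \<noteq> 0)"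
  shows "(invertible_mat M \<longleftrightarrow> cond)
     \<and> (cond \<and> (\<forall>k. 4 \<le> k \<and> k \<le> l + 2 \<longrightarrow> wprod \<theta> px py phi 1 k \<noteq> 0) \<longrightarrow>
         (\<exists>D :: real mat. D \<in> carrier_mat (3 * l) (3 * l) \<and> diagonal_mat D \<and>
            (\<forall>ev. eigenvalue (map_mat complex_of_real (D * M)) ev \<longrightarrow> Re ev > 0)))"
proof -
  note conditions = leader_condition_iff[where l = l] follower_condition_iff[where l = l]
    leader_follower_condition_iff[where l = l]
  have "invertible_mat M \<longleftrightarrow> det M \<noteq> 0"
    unfolding M_def by (rule invertible_mat_iff_det_nonzero[OF Mff_carrier_mat])
  also have "\<dots> \<longleftrightarrow> cond"
    unfolding M_def E_def cond_def det_Mff_dual_entry_path_nonzero_iff[OF assms(1)] conditions by blast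
  finally have "invertible_mat M \<longleftrightarrow> cond" .
  moreover have "cond \<and> (\<forall>k. 4 \<le> k \<and> k \<le> l + 2 \<longrightarrow> wprod \<theta> px py phi 1 k \<noteq> 0) \<longrightarrow>
      (\<exists>D :: real mat. D \<in> carrier_mat (3 * l) (3 * l) \<and> diagonal_mat D \<and>
        (\<forall>ev. eigenvalue (map_mat complex_of_real (D * M)) ev \<longrightarrow> Re ev > 0))"
    unfolding M_def E_def cond_def conditions
    using Mff_dual_entry_path_diagonally_stabilizable[where l = l and \<theta> = \<theta>] by blast
  ultimately show ?thesis by blast
qed

end
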